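(* Let $\bar A=\{A_i\}$ be a partition with $A_i\in(P_i,Q_i)$ such that every $A_i$ satisfies the short cycle property, i.e. $T_iA_i\in(Q_{\rho(i)},A_{\rho(i)+1})$ and $T_{i-1}A_i\in(A_{\theta(i-1)},P_{\theta(i-1)+1})$. Put $B_i=T_{\sigma(i-1)}A_{\sigma(i-1)}$, $C_i=T_{\sigma(i+1)}A_{\sigma(i+1)+1}$ and \[ \Omega_{\bar A}=\bigcup_{i=1}^{8g-4}\Big([Q_{i+2},P_{i-1}]\times[A_i,A_{i+1}]\cup[Q_{i+1},Q_{i+2}]\times[A_i,C_i]\cup[P_{i-1},P_i]\times[B_i,A_{i+1}]\Big). \] Let $p_i,q_i,b_i,c_i$ be angular coordinates of $P_i,Q_i,B_i,C_i$ (e.g. $P_i=e^{\mathrm i p_i}$). With $d\nu=\frac{|dx|\,|dy|}{|x-y|^2}$, \[ \nu(\Omega_{\bar A})=\ln\prod_{i=1}^{8g-4}\frac{\left|\sin\frac{c_i-q_{i+2}}2\right|\,\left|\sin\frac{b_i-p_{i-1}}2\right|}{\left|\sin\frac{b_i-p_i}2\right|\,\left|\sin\frac{c_i-q_{i+1}}2\right|}. \]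
   Context: Setting. Fix $g\ge 2$; indices are mod $8g-4$. Let $\mathcal F$ be the regular hyperbolic $(8g-4)$-gon in the unit disk centered at $0$ with all interior angles $\pi/2$, sides labeled $1,\dots,8g-4$ counterclockwise, side $i$ joining vertices $V_i$ and $V_{i+1}$. The complete geodesic extending side $i$ goes from $P_i$ (beyond $V_i$) to $Q_{i+1}$ (beyond $V_{i+1}$) on the unit circle $\mathbb S$; counterclockwise order $P_1,Q_1,P_2,Q_2,\dots,P_{8g-4},Q_{8g-4}$. $\sigma(i)=4g-i$ ($i$ odd), $\sigma(i)=2-i$ ($i$ even), $\rho(i)=\sigma(i)+1$, $\theta(i)=\sigma(i)-1$. $T_i$ is the Möbius transformation mapping side $i$ onto side $\sigma(i)$, with isometric circle the geodesic $P_iQ_{i+1}$, mapped onto the geodesic $Q_{\sigma(i)+1}P_{\sigma(i)}$, inside to outside. Arcs $[A,B]$ etc. are counterclockwise from $A$ to $B$. The measure $\nu$ on $\mathbb S\times\mathbb S$ is $d\nu=|dx||dy|/|x-y|^2$, $|dx|,|dy|$ arc length. *)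

theory Defs
  imports "HOL-Analysis.Analysis" "HOL-Probability.Probability"
begin

definition NN :: "nat \<Rightarrow> int" where
  "NN g = 8 * int g - 4"

text \<open>Angular position of the (Euclidean) centre of the geodesic extending side i.
  Any common rotation of the picture gives the same statement; we fix side i centred
  at angle 2 pi i / N.\<close>
definition alpha :: "nat \<Rightarrow> int \<Rightarrow> real" where
  "alpha g i = 2 * pi * of_int i / of_int (NN g)"

text \<open>Half angular width of each side geodesic: adjacent side geodesics meet at right
  angles iff sin beta = sqrt 2 * sin (pi / N).\<close>
definition beta :: "nat \<Rightarrow> real" where
  "beta g = arcsin (sqrt 2 * sin (pi / of_int (NN g)))"

definition Pp :: "nat \<Rightarrow> int \<Rightarrow> complex" where
  "Pp g i = cis (alpha g i - beta g)"

definition Qp :: "nat \<Rightarrow> int \<Rightarrow> complex" where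
  "Qp g i = cis (alpha g (i - 1) + beta g)"

text \<open>Euclidean circle carrying the geodesic P_i Q_(i+1) (orthogonal to the unit circle).\<close>
definition side_center :: "nat \<Rightarrow> int \<Rightarrow> complex" where
  "side_center g i = complex_of_real (1 / cos (beta g)) * cis (alpha g i)"

definition side_radius :: "nat \<Rightarrow> real" where
  "side_radius g = tan (beta g)"

definition side_circle :: "nat \<Rightarrow> int \<Rightarrow> complex set" where
  "side_circle g i = sphere (side_center g i) (side_radius g)"

definition sigma :: "nat \<Rightarrow> int \<Rightarrow> int" where
  "sigma g i = (if odd i then 4 * int g - i else 2 - i)"

definition rho :: "nat \<Rightarrow> int \<Rightarrow> int" where
  "rho g i = sigma g i + 1"

definition theta :: "nat \<Rightarrow> int \<Rightarrow> int" where
  "theta g i = sigma g i - 1"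

definition mob :: "complex \<Rightarrow> complex \<Rightarrow> complex \<Rightarrow> complex" where
  "mob a b z = (a * z + b) / (cnj b * z + cnj a)"

text \<open>Isometric circle of z -> (a z + b)/(cnj b z + cnj a) with |a|^2-|b|^2 = 1, b \<noteq> 0:
  the circle where |T'(z)| = 1, i.e. |cnj b z + cnj a| = 1.\<close>
definition iso_circle :: "complex \<Rightarrow> complex \<Rightarrow> complex set" where
  "iso_circle a b = sphere (- cnj a / cnj b) (1 / cmod b)"

text \<open>T_i: the orientation preserving disk automorphism whose isometric circle is the
  geodesic P_i Q_(i+1), mapped onto the geodesic Q_(sigma i + 1) P_(sigma i).\<close>
definition T :: "nat \<Rightarrow> int \<Rightarrow> complex \<Rightarrow> complex" where
  "T g i = (THE f. \<exists>a b. (cmod a)\<^sup>2 - (cmod b)\<^sup>2 = 1 \<and> b \<noteq> 0 \<and> f = mob a b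
      \<and> iso_circle a b = side_circle g i
      \<and> f ` side_circle g i = side_circle g (sigma g i))"

definition ccw_angle :: "complex \<Rightarrow> complex \<Rightarrow> real" where
  "ccw_angle X Y = (let t = Arg (Y / X) in if t < 0 then t + 2 * pi else t)"

definition closed_arc :: "complex \<Rightarrow> complex \<Rightarrow> complex set" where
  "closed_arc X Y = {X * cis t | t. 0 \<le> t \<and> t \<le> ccw_angle X Y}"

definition open_arc :: "complex \<Rightarrow> complex \<Rightarrow> complex set" where
  "open_arc X Y = {X * cis t | t. 0 < t \<and> t < ccw_angle X Y}"

definition arc_measure :: "complex measure" where
  "arc_measure = distr (restrict_space lborel {0..<2*pi}) borel cis"

definition nu :: "(complex \<times> complex) measure" where
  "nu = density (arc_measure \<Otimes>\<^sub>M arc_measure)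
          (\<lambda>(x, y). ennreal (1 / (cmod (x - y))\<^sup>2))"

definition Bpt :: "nat \<Rightarrow> (int \<Rightarrow> complex) \<Rightarrow> int \<Rightarrow> complex" where
  "Bpt g A i = T g (sigma g (i - 1)) (A (sigma g (i - 1)))"

definition Cpt :: "nat \<Rightarrow> (int \<Rightarrow> complex) \<Rightarrow> int \<Rightarrow> complex" where
  "Cpt g A i = T g (sigma g (i + 1)) (A (sigma g (i + 1) + 1))"

definition Omega :: "nat \<Rightarrow> (int \<Rightarrow> complex) \<Rightarrow> (complex \<times> complex) set" where
  "Omega g A = (\<Union>i\<in>{1..NN g}.
      (closed_arc (Qp g (i + 2)) (Pp g (i - 1)) \<times> closed_arc (A i) (A (i + 1)))
    \<union> (closed_arc (Qp g (i + 1)) (Qp g (i + 2)) \<times> closed_arc (A i) (Cpt g A i))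
    \<union> (closed_arc (Pp g (i - 1)) (Pp g i) \<times> closed_arc (Bpt g A i) (A (i + 1))))"

end

theory Submission
  imports Defs "HOL-Library.Real_Mod"
begin

text \<open>In angular coordinates the density of \<open>\<nu>\<close> is \<open>1 / (4 sin\<^sup>2 ((x - y) / 2))\<close>, and its
  double integral over a product of arcs \<open>[x\<^sub>1, x\<^sub>2] \<times> [y\<^sub>1, y\<^sub>2]\<close> is the logarithm of a cross
  ratio of sines. For each \<open>i\<close> the set \<open>\<Omega>\<close> contributes three such products, lying side by side
  over the arc from \<open>Q\<^sub>i\<^sub>+\<^sub>1\<close> to \<open>P\<^sub>i\<close> and inside \<open>[A\<^sub>i, A\<^sub>i\<^sub>+\<^sub>1]\<close>; the products overlap only
  along the null set of lines through the points \<open>P\<^sub>j\<close>, \<open>Q\<^sub>j\<close>, \<open>A\<^sub>j\<close>. Summing the cross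
  ratios, all terms involving the \<open>A\<^sub>i\<close> telescope around the polygon and only the terms with
  \<open>B\<^sub>i\<close> and \<open>C\<^sub>i\<close> survive.\<close>

section \<open>Angular coordinates on the unit circle\<close>

lemma cis_eq_cisE:
  assumes "cis s = cis t"
  obtains m :: int where "s = t + 2 * pi * of_int m"
proof -
  have "cis (s - t) = 1" using assms by (simp add: cis_divide[symmetric])
  then obtain m :: int where "s - t = of_int m * (2 * pi)" by (auto simp: cis_eq_1_iff)
  then show thesis by (intro that[of m]) (simp add: algebra_simps)
qed

lemma cis_add_2pi_int: "cis (t + 2 * pi * of_int m) = cis t"
  by (simp add: cis_mult[symmetric])

lemma cis_add_2pi: "cis (t + 2 * pi) = cis t"
  using cis_add_2pi_int[of t 1] by simp

lemma inj_on_cis: "inj_on cis {x..<x + 2 * pi}"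
proof (rule inj_onI)
  fix s t assume s: "s \<in> {x..<x + 2 * pi}" and t: "t \<in> {x..<x + 2 * pi}" and "cis s = cis t"
  then obtain m :: int where m: "s = t + 2 * pi * of_int m" by (elim cis_eq_cisE)
  have "2 * pi * of_int m < 2 * pi * 1" "2 * pi * (- 1) < 2 * pi * of_int m"
    using s t m by (simp_all only: atLeastLessThan_iff) linarith+
  moreover have "0 < 2 * pi" by simp
  ultimately have "of_int m < (1::real)" "-1 < (of_int m :: real)"
    by (simp_all only: mult_less_cancel_left_pos)
  then have "m = 0" by linarith
  then show "s = t" using m by simp
qed

lemma ccw_angle_cis:
  assumes "a \<le> b" "b < a + 2 * pi"
  shows "ccw_angle (cis a) (cis b) = b - a"
proof (cases "b - a \<le> pi")
  case True
  then have "Arg (cis (b - a)) = b - a" using assms by (intro Arg_cis) auto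
  then show ?thesis unfolding ccw_angle_def Let_def cis_divide using assms by simp
next
  case False
  have "Arg (cis (b - a - 2 * pi)) = b - a - 2 * pi" using assms False by (intro Arg_cis) auto
  then have "Arg (cis (b - a)) = b - a - 2 * pi" using cis_add_2pi[of "b - a - 2 * pi"] by simp
  then show ?thesis unfolding ccw_angle_def Let_def cis_divide using assms False by simp
qed

lemma closed_arc_cis:
  assumes "a \<le> b" "b < a + 2 * pi"
  shows "closed_arc (cis a) (cis b) = cis ` {a..b}"
proof -
  have "closed_arc (cis a) (cis b) = {cis (a + t) | t. 0 \<le> t \<and> t \<le> b - a}"
    unfolding closed_arc_def ccw_angle_cis[OF assms] by (simp add: cis_mult)
  also have "\<dots> = cis ` {a..b}"
    by (auto simp: image_def intro!: exI[of _ "x - a" for x])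
  finally show ?thesis .
qed

lemma open_arc_cis:
  assumes "a \<le> b" "b < a + 2 * pi"
  shows "open_arc (cis a) (cis b) = cis ` {a<..<b}"
proof -
  have "open_arc (cis a) (cis b) = {cis (a + t) | t. 0 < t \<and> t < b - a}"
    unfolding open_arc_def ccw_angle_cis[OF assms] by (simp add: cis_mult)
  also have "\<dots> = cis ` {a<..<b}"
    by (auto simp: image_def intro!: exI[of _ "x - a" for x])
  finally show ?thesis .
qed

lemma open_arc_cis_imp_ex:
  assumes "z \<in> open_arc (cis u) (cis v)" "u \<le> v" "v < u + 2 * pi"
  shows "\<exists>s. s \<in> {u<..<v} \<and> z = cis s"
  using assms open_arc_cis[of u v] by auto

lemma cis_in_closed_arc_cis_iff:
  assumes "a \<le> b" "b < a + 2 * pi" "a \<le> t" "t < a + 2 * pi"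
  shows "cis t \<in> closed_arc (cis a) (cis b) \<longleftrightarrow> a \<le> t \<and> t \<le> b"
proof -
  have "cis t \<in> cis ` {a..b} \<longleftrightarrow> t \<in> {a..b}"
    using assms by (intro inj_on_image_mem_iff[OF inj_on_cis[of a]]) auto
  then show ?thesis using closed_arc_cis[OF assms(1,2)] by simp
qed

lemma closed_arc_closed: "closed (closed_arc X Y)"
proof -
  have "closed_arc X Y = (\<lambda>t. X * cis t) ` {0..ccw_angle X Y}"
    unfolding closed_arc_def by auto
  moreover have "compact ((\<lambda>t. X * cis t) ` {0..ccw_angle X Y})"
    by (intro compact_continuous_image continuous_intros) auto
  ultimately show ?thesis by (simp add: compact_imp_closed)
qed

lemma closed_arc_borel[measurable]: "closed_arc X Y \<in> sets borel"
  using closed_arc_closed by simp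

lemma norm_cis_diff: "cmod (cis t - cis u) = 2 * \<bar>sin ((t - u) / 2)\<bar>"
proof -
  have "(cmod (cis t - cis u))\<^sup>2 = (cos t - cos u)\<^sup>2 + (sin t - sin u)\<^sup>2"
    by (simp add: cmod_power2)
  also have "\<dots> = 2 - 2 * cos (t - u)"
    by (simp add: cos_diff power2_eq_square algebra_simps)
  also have "cos (t - u) = 1 - 2 * (sin ((t - u) / 2))\<^sup>2"
    by (subst cos_double_sin[symmetric]) (simp only: mult_2 field_sum_of_halves)
  finally have "(cmod (cis t - cis u))\<^sup>2 = (2 * \<bar>sin ((t - u) / 2)\<bar>)\<^sup>2"
    by (simp add: power_mult_distrib)
  then show ?thesis by (rule power2_eq_imp_eq) auto
qed

lemma cis_Arg_cis: "cis (Arg (cis t)) = cis t"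
  by (simp add: cis_Arg sgn_div_norm)

lemma abs_sin_half_Arg_diff:
  "\<bar>sin ((Arg (cis t) - Arg (cis u)) / 2)\<bar> = \<bar>sin ((t - u) / 2)\<bar>"
  using norm_cis_diff[of "Arg (cis t)" "Arg (cis u)"] norm_cis_diff[of t u]
  by (simp add: cis_Arg_cis)

lemma abs_sin_half_Arg_diff_cis:
  assumes "0 < t - u" "t - u < 2 * pi"
  shows "\<bar>sin ((Arg (cis u) - Arg (cis t)) / 2)\<bar> = sin ((t - u) / 2)"
proof -
  have "0 < sin ((t - u) / 2)" using assms by (intro sin_gt_zero) auto
  moreover have "sin ((u - t) / 2) = - sin ((t - u) / 2)"
    by (simp add: sin_minus[symmetric] minus_divide_left)
  ultimately show ?thesis by (simp add: abs_sin_half_Arg_diff)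
qed

lemma nn_integral_lborel_shift:
  fixes G :: "real \<Rightarrow> ennreal"
  assumes "G \<in> borel_measurable borel"
  shows "(\<integral>\<^sup>+t. G t \<partial>lborel) = (\<integral>\<^sup>+t. G (t + e) \<partial>lborel)"
  using nn_integral_real_affine[OF assms, of 1 e] by (simp add: add.commute)

lemma borel_measurable_cis[measurable]: "cis \<in> borel_measurable borel"
  by (intro borel_measurable_continuous_onI continuous_on_cis continuous_on_id)

lemma nn_integral_cis_window:
  fixes f :: "complex \<Rightarrow> ennreal"
  assumes [measurable]: "f \<in> borel_measurable borel"
  shows "(\<integral>\<^sup>+t. f (cis t) * indicator {c..<c + 2*pi} t \<partial>lborel)
       = (\<integral>\<^sup>+t. f (cis t) * indicator {0..<2*pi} t \<partial>lborel)"
proof -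
  define k where "k = \<lfloor>c / (2*pi)\<rfloor>"
  define d where "d = c - 2*pi * of_int k"
  have "of_int k \<le> c / (2*pi)" "c / (2*pi) < of_int k + 1"
    unfolding k_def by linarith+
  then have d: "0 \<le> d" "d < 2*pi"
    unfolding d_def by (simp_all add: field_simps)
  have "(\<integral>\<^sup>+t. f (cis t) * indicator {c..<c + 2*pi} t \<partial>lborel)
      = (\<integral>\<^sup>+t. f (cis (t + 2*pi * of_int k)) * indicator {c..<c + 2*pi} (t + 2*pi * of_int k) \<partial>lborel)"
    by (rule nn_integral_lborel_shift) measurable
  also have "\<dots> = (\<integral>\<^sup>+t. f (cis t) * indicator {d..<2*pi} t + f (cis t) * indicator {2*pi..<2*pi + d} t \<partial>lborel)"
    by (intro nn_integral_cong) (use d in \<open>auto simp: cis_add_2pi_int d_def indicator_def\<close>)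
  also have "\<dots> = (\<integral>\<^sup>+t. f (cis t) * indicator {d..<2*pi} t \<partial>lborel)
      + (\<integral>\<^sup>+t. f (cis t) * indicator {2*pi..<2*pi + d} t \<partial>lborel)"
    by (rule nn_integral_add) measurable
  also have "(\<integral>\<^sup>+t. f (cis t) * indicator {2*pi..<2*pi + d} t \<partial>lborel)
      = (\<integral>\<^sup>+t. f (cis (t + 2*pi)) * indicator {2*pi..<2*pi + d} (t + 2*pi) \<partial>lborel)"
    by (rule nn_integral_lborel_shift) measurable
  also have "\<dots> = (\<integral>\<^sup>+t. f (cis t) * indicator {0..<d} t \<partial>lborel)"
    by (intro nn_integral_cong) (auto simp: indicator_def cis_add_2pi)
  also have "(\<integral>\<^sup>+t. f (cis t) * indicator {d..<2*pi} t \<partial>lborel) + \<dots>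
      = (\<integral>\<^sup>+t. f (cis t) * indicator {d..<2*pi} t + f (cis t) * indicator {0..<d} t \<partial>lborel)"
    by (rule nn_integral_add[symmetric]) measurable
  also have "\<dots> = (\<integral>\<^sup>+t. f (cis t) * indicator {0..<2*pi} t \<partial>lborel)"
    by (intro nn_integral_cong) (use d in \<open>auto simp: indicator_def\<close>)
  finally show ?thesis .
qed

lemma sets_arc_measure[simp, measurable_cong]: "sets arc_measure = sets borel"
  unfolding arc_measure_def by simp

lemma space_arc_measure[simp]: "space arc_measure = UNIV"
  unfolding arc_measure_def by simp

lemma nn_integral_arc_measure:
  fixes f :: "complex \<Rightarrow> ennreal"
  assumes [measurable]: "f \<in> borel_measurable borel"
  shows "(\<integral>\<^sup>+z. f z \<partial>arc_measure) = (\<integral>\<^sup>+t. f (cis t) * indicator {c..<c + 2*pi} t \<partial>lborel)"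
proof -
  have "cis \<in> measurable (restrict_space lborel {0..<2*pi}) borel"
    by (intro measurable_restrict_space1) simp
  then have "(\<integral>\<^sup>+z. f z \<partial>arc_measure) = (\<integral>\<^sup>+t. f (cis t) \<partial>restrict_space lborel {0..<2*pi})"
    unfolding arc_measure_def by (rule nn_integral_distr) simp
  also have "\<dots> = (\<integral>\<^sup>+t. f (cis t) * indicator {0..<2*pi} t \<partial>lborel)"
    by (rule nn_integral_restrict_space) simp
  finally show ?thesis using nn_integral_cis_window[OF assms, of c] by simp
qed

lemma emeasure_arc_measure_UNIV: "emeasure arc_measure UNIV = ennreal (2*pi)"
proof -
  have "emeasure arc_measure UNIV = (\<integral>\<^sup>+z. 1 \<partial>arc_measure)"
    by (simp add: nn_integral_const)
  also have "\<dots> = (\<integral>\<^sup>+t. 1 * indicator {0..<0 + 2*pi} t \<partial>lborel)"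
    by (rule nn_integral_arc_measure) simp
  finally show ?thesis by simp
qed

interpretation arc_measure: finite_measure arc_measure
  by (rule finite_measureI) (simp add: emeasure_arc_measure_UNIV)

lemma emeasure_arc_measure_singleton: "emeasure arc_measure {z} = 0"
proof -
  have "countable {t. cis t = z}"
  proof (cases "\<exists>t0. cis t0 = z")
    case True
    then obtain t0 where t0: "cis t0 = z" by blast
    have "{t. cis t = z} \<subseteq> range (\<lambda>m::int. t0 + 2*pi * of_int m)"
      using t0 by (auto elim!: cis_eq_cisE)
    then show ?thesis by (rule countable_subset) simp
  qed simp
  then have "AE t in lborel. t \<notin> {t. cis t = z}"
    by (rule AE_not_in[OF countable_imp_null_set_lborel])
  then have "AE t in lborel. indicator {z} (cis t) * indicator {0..<0 + 2*pi} t = (0::ennreal)"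
    by eventually_elim simp
  then have "(\<integral>\<^sup>+t. indicator {z} (cis t) * indicator {0..<0 + 2*pi} t \<partial>lborel) = 0"
    by (simp add: nn_integral_0_iff_AE)
  moreover have "emeasure arc_measure {z} = (\<integral>\<^sup>+t. indicator {z} (cis t) * indicator {0..<0 + 2*pi} t \<partial>lborel)"
    by (subst nn_integral_indicator[symmetric]) (simp, rule nn_integral_arc_measure, simp)
  ultimately show ?thesis by simp
qed

lemma countable_null_sets_arc_measure:
  assumes "countable X"
  shows "X \<in> null_sets arc_measure"
proof -
  have "emeasure arc_measure X = (\<integral>\<^sup>+x. emeasure arc_measure {x} \<partial>count_space X)"
    by (rule emeasure_countable_singleton[OF _ assms]) simp
  then show ?thesis
    using sets.countable[OF _ assms, of arc_measure]
    by (simp add: null_sets_def emeasure_arc_measure_singleton)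
qed

section \<open>The measure of a product of arcs\<close>

lemma nn_integral_FTC_atLeastAtMost:
  fixes F f :: "real \<Rightarrow> real"
  assumes "a \<le> b"
    and deriv: "\<And>x. a \<le> x \<Longrightarrow> x \<le> b \<Longrightarrow> (F has_real_derivative f x) (at x)"
    and nonneg: "\<And>x. a \<le> x \<Longrightarrow> x \<le> b \<Longrightarrow> 0 \<le> f x"
  shows "(\<integral>\<^sup>+x. ennreal (f x) * indicator {a..b} x \<partial>lborel) = ennreal (F b - F a)"
    and "F a \<le> F b"
proof -
  have I: "(f has_integral F b - F a) {a..b}"
    using assms(1) deriv
    by (intro fundamental_theorem_of_calculus)
       (auto simp: has_real_derivative_iff_has_vector_derivative intro: has_vector_derivative_at_within)
  show "(\<integral>\<^sup>+x. ennreal (f x) * indicator {a..b} x \<partial>lborel) = ennreal (F b - F a)"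
    using nonneg by (intro nn_integral_has_integral_lebesgue'[OF _ I]) auto
  show "F a \<le> F b"
    using has_integral_nonneg[OF I] nonneg by auto
qed

lemma sets_nu[simp]: "sets nu = sets (arc_measure \<Otimes>\<^sub>M arc_measure)"
  unfolding nu_def by simp

lemma null_sets_nu:
  assumes "Z \<in> null_sets (arc_measure \<Otimes>\<^sub>M arc_measure)"
  shows "Z \<in> null_sets nu"
proof -
  have "AE x in arc_measure \<Otimes>\<^sub>M arc_measure. x \<notin> Z" by (rule AE_not_in[OF assms])
  then show ?thesis unfolding nu_def
    by (subst null_sets_density_iff) (use assms in \<open>auto elim!: AE_mp\<close>)
qed

lemma nn_integral_nu_density_arc:
  assumes "y1 \<le> y2" "y2 < t" "t < y1 + 2*pi"
  shows "(\<integral>\<^sup>+y. ennreal (1 / (cmod (cis t - y))\<^sup>2) * indicator (closed_arc (cis y1) (cis y2)) y \<partial>arc_measure)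
       = ennreal (cot ((t - y2) / 2) / 2 - cot ((t - y1) / 2) / 2)"
    and "cot ((t - y1) / 2) / 2 \<le> cot ((t - y2) / 2) / 2"
proof -
  have sin_pos: "0 < sin ((t - u) / 2)" if "y1 \<le> u" "u \<le> y2" for u
    using that assms by (intro sin_gt_zero) auto
  have deriv: "((\<lambda>u. cot ((t - u) / 2) / 2) has_real_derivative 1 / (4 * (sin ((t - u) / 2))\<^sup>2)) (at u)"
    if "y1 \<le> u" "u \<le> y2" for u
    using sin_pos[OF that] unfolding cot_def
    by (auto intro!: derivative_eq_intros simp: field_simps power2_eq_square)
  have nonneg: "0 \<le> 1 / (4 * (sin ((t - u) / 2))\<^sup>2)" for u
    by simp
  have "(\<integral>\<^sup>+y. ennreal (1 / (cmod (cis t - y))\<^sup>2) * indicator (closed_arc (cis y1) (cis y2)) y \<partial>arc_measure)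
      = (\<integral>\<^sup>+u. ennreal (1 / (cmod (cis t - cis u))\<^sup>2) * indicator (closed_arc (cis y1) (cis y2)) (cis u)
            * indicator {y1..<y1 + 2*pi} u \<partial>lborel)"
    by (rule nn_integral_arc_measure) simp
  also have "\<dots> = (\<integral>\<^sup>+u. ennreal (1 / (4 * (sin ((t - u) / 2))\<^sup>2)) * indicator {y1..y2} u \<partial>lborel)"
    using assms
    by (intro nn_integral_cong)
       (auto simp: indicator_def norm_cis_diff power_mult_distrib cis_in_closed_arc_cis_iff)
  also have "\<dots> = ennreal (cot ((t - y2) / 2) / 2 - cot ((t - y1) / 2) / 2)"
    using assms(1) deriv nonneg by (rule nn_integral_FTC_atLeastAtMost(1))
  finally show "(\<integral>\<^sup>+y. ennreal (1 / (cmod (cis t - y))\<^sup>2) * indicator (closed_arc (cis y1) (cis y2)) y \<partial>arc_measure)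
       = ennreal (cot ((t - y2) / 2) / 2 - cot ((t - y1) / 2) / 2)" .
  show "cot ((t - y1) / 2) / 2 \<le> cot ((t - y2) / 2) / 2"
    using assms(1) deriv nonneg by (rule nn_integral_FTC_atLeastAtMost(2))
qed

definition log_cross_ratio :: "real \<Rightarrow> real \<Rightarrow> real \<Rightarrow> real \<Rightarrow> real" where
  "log_cross_ratio x1 x2 y1 y2 =
     ln (sin ((x2 - y2) / 2)) - ln (sin ((x2 - y1) / 2)) - ln (sin ((x1 - y2) / 2)) + ln (sin ((x1 - y1) / 2))"

lemma emeasure_nu_arc_times_arc:
  assumes "y1 \<le> y2" "y2 < x1" "x1 \<le> x2" "x2 < y1 + 2*pi"
  shows "emeasure nu (closed_arc (cis x1) (cis x2) \<times> closed_arc (cis y1) (cis y2))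
           = ennreal (log_cross_ratio x1 x2 y1 y2)"
    and "0 \<le> log_cross_ratio x1 x2 y1 y2"
proof -
  define X where "X = closed_arc (cis x1) (cis x2)"
  define Y where "Y = closed_arc (cis y1) (cis y2)"
  define w where "w = (\<lambda>(x::complex, y). ennreal (1 / (cmod (x - y))\<^sup>2))"
  define F where "F t = ln (sin ((t - y2) / 2)) - ln (sin ((t - y1) / 2))" for t
  define f where "f t = cot ((t - y2) / 2) / 2 - cot ((t - y1) / 2) / 2" for t
  have [measurable]: "X \<in> sets borel" "Y \<in> sets borel"
    "w \<in> borel_measurable (arc_measure \<Otimes>\<^sub>M arc_measure)"
    unfolding X_def Y_def w_def by simp_all
  have inner: "(\<integral>\<^sup>+y. w (cis t, y) * indicator Y y \<partial>arc_measure) = ennreal (f t)" "0 \<le> f t"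
    if "x1 \<le> t" "t \<le> x2" for t
    using nn_integral_nu_density_arc[of y1 y2 t] that assms unfolding w_def Y_def f_def by auto
  have deriv: "(F has_real_derivative f t) (at t)" if "x1 \<le> t" "t \<le> x2" for t
  proof -
    have "0 < sin ((t - y1) / 2)" "0 < sin ((t - y2) / 2)"
      using that assms by (auto intro!: sin_gt_zero)
    then show ?thesis unfolding F_def f_def cot_def
      by (auto intro!: derivative_eq_intros simp: field_simps)
  qed
  have "emeasure nu (X \<times> Y) = (\<integral>\<^sup>+p. w p * indicator (X \<times> Y) p \<partial>(arc_measure \<Otimes>\<^sub>M arc_measure))"
    unfolding nu_def w_def by (rule emeasure_density) measurable
  also have "\<dots> = (\<integral>\<^sup>+x. indicator X x * (\<integral>\<^sup>+y. w (x, y) * indicator Y y \<partial>arc_measure) \<partial>arc_measure)"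
    by (subst arc_measure.nn_integral_fst[symmetric])
       (auto intro!: nn_integral_cong simp: indicator_def)
  also have "\<dots> = (\<integral>\<^sup>+t. indicator X (cis t) * (\<integral>\<^sup>+y. w (cis t, y) * indicator Y y \<partial>arc_measure)
                      * indicator {x1..<x1 + 2*pi} t \<partial>lborel)"
    by (rule nn_integral_arc_measure) measurable
  also have "\<dots> = (\<integral>\<^sup>+t. ennreal (f t) * indicator {x1..x2} t \<partial>lborel)"
    using assms inner by (intro nn_integral_cong) (auto simp: indicator_def X_def cis_in_closed_arc_cis_iff)
  also have "\<dots> = ennreal (F x2 - F x1)"
    using assms(3) deriv inner(2) by (rule nn_integral_FTC_atLeastAtMost(1))
  finally show "emeasure nu (closed_arc (cis x1) (cis x2) \<times> closed_arc (cis y1) (cis y2))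
           = ennreal (log_cross_ratio x1 x2 y1 y2)"
    unfolding X_def Y_def F_def log_cross_ratio_def by (simp add: algebra_simps)
  show "0 \<le> log_cross_ratio x1 x2 y1 y2"
    using nn_integral_FTC_atLeastAtMost(2)[OF assms(3) deriv inner(2)]
    unfolding F_def log_cross_ratio_def by simp
qed

definition central_angle :: "nat \<Rightarrow> real" where
  "central_angle g = 2 * pi / of_int (NN g)"

definition P_angle :: "nat \<Rightarrow> int \<Rightarrow> real" where
  "P_angle g k = of_int k * central_angle g - beta g"

definition Q_angle :: "nat \<Rightarrow> int \<Rightarrow> real" where
  "Q_angle g k = (of_int k - 1) * central_angle g + beta g"

lemma Pp_eq_cis: "Pp g k = cis (P_angle g k)"
  unfolding Pp_def P_angle_def alpha_def central_angle_def by (simp add: field_simps)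

lemma Qp_eq_cis: "Qp g k = cis (Q_angle g k)"
  unfolding Qp_def Q_angle_def alpha_def central_angle_def by (simp add: field_simps)

text \<open>Turns every polygon angle into a linear expression in \<open>of_int k * central_angle g\<close>, for \<open>linarith\<close>.\<close>
lemmas angle_simps = P_angle_def Q_angle_def of_int_add of_int_diff distrib_right left_diff_distrib

lemma NN_ge_12: "g \<ge> 2 \<Longrightarrow> NN g \<ge> 12"
  unfolding NN_def by simp

lemma NN_times_central_angle: "g \<ge> 2 \<Longrightarrow> of_int (NN g) * central_angle g = 2 * pi"
  using NN_ge_12[of g] unfolding central_angle_def by simp

lemma central_angle_bounds:
  assumes "g \<ge> 2"
  shows "0 < central_angle g" "central_angle g \<le> pi / 6"
proof -
  have N: "12 \<le> real_of_int (NN g)" using NN_ge_12[OF assms] by linarith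
  then show "0 < central_angle g" unfolding central_angle_def by simp
  have "2 * pi / real_of_int (NN g) \<le> 2 * pi / 12"
    using N by (intro divide_left_mono) auto
  then show "central_angle g \<le> pi / 6" unfolding central_angle_def by simp
qed

lemma beta_bounds:
  assumes "g \<ge> 2"
  shows "central_angle g / 2 < beta g" "beta g < central_angle g"
proof -
  define x where "x = pi / of_int (NN g)"
  have hx: "central_angle g = 2 * x" unfolding x_def central_angle_def by simp
  have x: "0 < x" "x \<le> pi / 12" using central_angle_bounds[OF assms] hx by auto
  have sin_x: "0 < sin x" using x by (intro sin_gt_zero) auto
  have "sqrt 2 / 2 < cos x"
    using cos_monotone_0_pi[of x "pi / 4"] x cos_45 by auto
  then have "sqrt 2 * sin x < 2 * sin x * cos x"
    using mult_strict_left_mono[OF _ sin_x, of "sqrt 2 / 2" "cos x"] by (simp add: mult_ac)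
  then have upper: "sqrt 2 * sin x < sin (2 * x)" by (simp only: sin_double)
  have lower: "sin x < sqrt 2 * sin x" and pos: "0 < sqrt 2 * sin x" using sin_x by simp_all
  have le_1: "sqrt 2 * sin x \<le> 1" using upper sin_le_one[of "2 * x"] by linarith
  have beta: "beta g = arcsin (sqrt 2 * sin x)" unfolding beta_def x_def by simp
  have "arcsin (sqrt 2 * sin x) < arcsin (sin (2 * x))"
    using upper pos sin_le_one[of "2 * x"] by (intro arcsin_less_arcsin) auto
  also have "arcsin (sin (2 * x)) = 2 * x" using x by (intro arcsin_sin) auto
  finally show "beta g < central_angle g" using beta hx by simp
  have "arcsin (sin x) < arcsin (sqrt 2 * sin x)"
    using lower le_1 sin_x by (intro arcsin_less_arcsin) auto
  also have "arcsin (sin x) = x" using x by (intro arcsin_sin) auto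
  finally show "central_angle g / 2 < beta g" using beta hx by simp
qed

section \<open>Decomposition of \<open>\<Omega>\<close> into products of arcs\<close>

lemma sum_telescope_int:
  fixes f :: "int \<Rightarrow> 'a::ab_group_add"
  assumes "0 \<le> n"
  shows "(\<Sum>i\<in>{1..n}. f i - f (i + 1)) = f 1 - f (n + 1)"
  using assms
proof (induction n rule: int_ge_induct)
  case (step n)
  then have "{1..n + 1} = insert (n + 1) {1..n}"
    using atLeastAtMostPlus1_int_conv[of 1 n] by (simp add: add.commute)
  with step show ?case by simp
qed simp

lemma sigma_sigma: "sigma g (sigma g i) = i"
  unfolding sigma_def by auto

text \<open>Only the positions of \<open>B\<^sub>i\<close> and \<open>C\<^sub>i\<close> enter the computation; the short cycle property
  is what provides them.\<close>
locale polygon_partition =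
  fixes g :: nat and A :: "int \<Rightarrow> complex"
  assumes g_ge_2: "g \<ge> 2"
    and A_periodic: "\<And>i. A (i + NN g) = A i"
    and A_in_arc: "\<And>i. A i \<in> open_arc (Pp g i) (Qp g i)"
    and B_in_arc: "\<And>i. Bpt g A i \<in> open_arc (Qp g i) (A (i + 1))"
    and C_in_arc: "\<And>i. Cpt g A i \<in> open_arc (A i) (Pp g (i + 1))"
begin

abbreviation h :: real where "h \<equiv> central_angle g"

lemma angle_bounds: "0 < h" "h \<le> pi / 6" "h / 2 < beta g" "beta g < h"
  using central_angle_bounds[OF g_ge_2] beta_bounds[OF g_ge_2] by auto

lemma NN_pos: "0 < NN g"
  using NN_ge_12[OF g_ge_2] by simp

lemma A_lift_ex: "\<exists>s. s \<in> {P_angle g k<..<Q_angle g k} \<and> A k = cis s"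
  using A_in_arc[of k] angle_bounds
  by (intro open_arc_cis_imp_ex) (auto simp: Pp_eq_cis Qp_eq_cis angle_simps)

definition a :: "int \<Rightarrow> real" where
  "a k = (SOME s. s \<in> {P_angle g k<..<Q_angle g k} \<and> A k = cis s)"

definition b :: "int \<Rightarrow> real" where
  "b i = (SOME s. s \<in> {Q_angle g i<..<a (i + 1)} \<and> Bpt g A i = cis s)"

definition c :: "int \<Rightarrow> real" where
  "c i = (SOME s. s \<in> {a i<..<P_angle g (i + 1)} \<and> Cpt g A i = cis s)"

lemma a_lift: "P_angle g k < a k" "a k < Q_angle g k" "A k = cis (a k)"
  using someI_ex[OF A_lift_ex[of k]] unfolding a_def by auto

lemma a_less: "i < j \<Longrightarrow> a i < a j"
  using a_lift(2)[of i] a_lift(1)[of j] angle_bounds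
    mult_right_mono[of "of_int i + 1" "of_int j" h]
  by (simp add: angle_simps)

lemma a_add_NN: "a (k + NN g) = a k + 2 * pi"
proof -
  let ?P = "P_angle g (k + NN g)"
  have shift: "P_angle g (k + NN g) = P_angle g k + 2 * pi" "Q_angle g (k + NN g) = Q_angle g k + 2 * pi"
    using NN_times_central_angle[OF g_ge_2] by (simp_all add: angle_simps)
  have "cis (a (k + NN g)) = cis (a k + 2 * pi)"
    using a_lift(3)[of k] a_lift(3)[of "k + NN g"] A_periodic[of k] by (simp add: cis_add_2pi)
  moreover have "a (k + NN g) \<in> {?P..<?P + 2 * pi}" "a k + 2 * pi \<in> {?P..<?P + 2 * pi}"
    using a_lift[of k] a_lift[of "k + NN g"] angle_bounds shift by (auto simp: angle_simps)
  ultimately show ?thesis by (rule inj_onD[OF inj_on_cis])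
qed

lemma b_lift: "Q_angle g i < b i" "b i < a (i + 1)" "Bpt g A i = cis (b i)"
proof -
  have ex: "\<exists>s. s \<in> {Q_angle g i<..<a (i + 1)} \<and> Bpt g A i = cis s"
    using B_in_arc[of i] a_lift[of "i + 1"] angle_bounds
    by (intro open_arc_cis_imp_ex) (auto simp: Qp_eq_cis angle_simps)
  show "Q_angle g i < b i" "b i < a (i + 1)" "Bpt g A i = cis (b i)"
    using someI_ex[OF ex] unfolding b_def by auto
qed

lemma c_lift: "a i < c i" "c i < P_angle g (i + 1)" "Cpt g A i = cis (c i)"
proof -
  have ex: "\<exists>s. s \<in> {a i<..<P_angle g (i + 1)} \<and> Cpt g A i = cis s"
    using C_in_arc[of i] a_lift[of i] angle_bounds
    by (intro open_arc_cis_imp_ex) (auto simp: Pp_eq_cis angle_simps)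
  show "a i < c i" "c i < P_angle g (i + 1)" "Cpt g A i = cis (c i)"
    using someI_ex[OF ex] unfolding c_def by auto
qed

lemma a_le: "i \<le> j \<Longrightarrow> a i \<le> a j"
  using a_less[of i j] by (cases "i = j") auto

lemma window_gap:
  assumes "Q_angle g (i + 1) \<le> x" "x \<le> P_angle g i + 2 * pi" "a i \<le> y" "y \<le> a (i + 1)"
  shows "0 < x - y" "x - y < 2 * pi"
  using assms a_lift(1)[of i] a_lift(2)[of "i + 1"] by auto

text \<open>Piece \<open>k\<close> of slice \<open>i\<close> lies over \<open>[xcut i k, xcut i (k + 1)]\<close>; the three pieces are, in
  this order, the second, first and third product in the definition of \<open>\<Omega>\<close>.\<close>
definition xcut :: "int \<Rightarrow> nat \<Rightarrow> real" where
  "xcut i k = [Q_angle g (i + 1), Q_angle g (i + 2), P_angle g (i - 1) + 2 * pi, P_angle g i + 2 * pi] ! k"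

definition ylow :: "int \<Rightarrow> nat \<Rightarrow> real" where
  "ylow i k = [a i, a i, b i] ! k"

definition yhigh :: "int \<Rightarrow> nat \<Rightarrow> real" where
  "yhigh i k = [c i, a (i + 1), a (i + 1)] ! k"

definition piece :: "int \<Rightarrow> nat \<Rightarrow> (complex \<times> complex) set" where
  "piece i k = closed_arc (cis (xcut i k)) (cis (xcut i (Suc k))) \<times> closed_arc (cis (ylow i k)) (cis (yhigh i k))"

lemma xcut_strict_mono: "k < l \<Longrightarrow> l \<le> 3 \<Longrightarrow> xcut i k < xcut i l"
proof -
  have "xcut i 0 < xcut i 1" "xcut i 1 < xcut i 2" "xcut i 2 < xcut i 3"
    using angle_bounds by (simp_all add: xcut_def angle_simps)
  moreover assume "k < l" "l \<le> 3"
  ultimately show "xcut i k < xcut i l"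
    by (auto simp: le_Suc_eq less_Suc_eq numeral_3_eq_3 numeral_2_eq_2)
qed

lemma xcut_mono: "k \<le> l \<Longrightarrow> l \<le> 3 \<Longrightarrow> xcut i k \<le> xcut i l"
  using xcut_strict_mono[of k l i] by (cases "k = l") auto

lemma xcut_0: "xcut i 0 = Q_angle g (i + 1)" and xcut_3: "xcut i 3 = P_angle g i + 2 * pi"
  by (simp_all add: xcut_def)

lemma y_bounds: "k < 3 \<Longrightarrow> a i \<le> ylow i k \<and> ylow i k \<le> yhigh i k \<and> yhigh i k \<le> a (i + 1)"
  using a_lift[of i] a_lift[of "i + 1"] b_lift[of i] c_lift[of i] angle_bounds
  by (auto simp: less_Suc_eq numeral_3_eq_3 numeral_2_eq_2 ylow_def yhigh_def angle_simps)

lemma Omega_eq_pieces: "Omega g A = (\<Union>(i, k)\<in>{1..NN g} \<times> {..<3}. piece i k)"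
proof -
  have "closed_arc (Qp g (i + 1)) (Qp g (i + 2)) \<times> closed_arc (A i) (Cpt g A i) = piece i 0"
       "closed_arc (Qp g (i + 2)) (Pp g (i - 1)) \<times> closed_arc (A i) (A (i + 1)) = piece i 1"
       "closed_arc (Pp g (i - 1)) (Pp g i) \<times> closed_arc (Bpt g A i) (A (i + 1)) = piece i 2" for i
    by (simp_all add: piece_def xcut_def ylow_def yhigh_def numeral_2_eq_2 Pp_eq_cis Qp_eq_cis
        cis_add_2pi flip: a_lift(3) b_lift(3) c_lift(3))
  then have "Omega g A = (\<Union>i\<in>{1..NN g}. piece i 0 \<union> piece i 1 \<union> piece i 2)"
    unfolding Omega_def by (simp add: Un_ac)
  also have "\<dots> = (\<Union>(i, k)\<in>{1..NN g} \<times> {..<3}. piece i k)"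
    unfolding numeral_3_eq_3 numeral_2_eq_2 lessThan_Suc by auto
  finally show ?thesis .
qed

lemma piece_corners:
  assumes "k < 3"
  shows "ylow i k \<le> yhigh i k" "yhigh i k < xcut i k" "xcut i k \<le> xcut i (Suc k)"
    "xcut i (Suc k) < ylow i k + 2 * pi"
proof -
  have "xcut i 0 \<le> xcut i k" "xcut i k < xcut i (Suc k)" "xcut i (Suc k) \<le> xcut i 3"
    using assms xcut_mono[of 0 k i] xcut_strict_mono[of k "Suc k" i] xcut_mono[of "Suc k" 3 i]
    by auto
  moreover have "a i \<le> ylow i k" "ylow i k \<le> yhigh i k" "yhigh i k \<le> a (i + 1)"
    using y_bounds[OF assms] by auto
  ultimately show "ylow i k \<le> yhigh i k" "yhigh i k < xcut i k" "xcut i k \<le> xcut i (Suc k)"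
    "xcut i (Suc k) < ylow i k + 2 * pi"
    using window_gap[of i "xcut i k" "yhigh i k"] window_gap[of i "xcut i (Suc k)" "ylow i k"]
    unfolding xcut_0 xcut_3 by auto
qed

lemma piece_eq_image:
  "k < 3 \<Longrightarrow> piece i k = cis ` {xcut i k..xcut i (Suc k)} \<times> cis ` {ylow i k..yhigh i k}"
  using piece_corners[of k i] unfolding piece_def by (simp add: closed_arc_cis)

lemma emeasure_piece:
  assumes "k < 3"
  shows "emeasure nu (piece i k)
           = ennreal (log_cross_ratio (xcut i k) (xcut i (Suc k)) (ylow i k) (yhigh i k))"
    and "0 \<le> log_cross_ratio (xcut i k) (xcut i (Suc k)) (ylow i k) (yhigh i k)"
  unfolding piece_def using emeasure_nu_arc_times_arc[OF piece_corners[OF assms]] by auto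

definition grid :: "(complex \<times> complex) set" where
  "grid = (range (Pp g) \<union> range (Qp g)) \<times> UNIV \<union> UNIV \<times> range A"

lemma grid_null: "grid \<in> null_sets nu"
proof -
  have "(range (Pp g) \<union> range (Qp g)) \<times> UNIV \<in> null_sets (arc_measure \<Otimes>\<^sub>M arc_measure)"
    by (intro arc_measure.times_in_null_sets1 countable_null_sets_arc_measure) auto
  moreover have "UNIV \<times> range A \<in> null_sets (arc_measure \<Otimes>\<^sub>M arc_measure)"
    by (intro arc_measure.times_in_null_sets2 countable_null_sets_arc_measure) auto
  ultimately show ?thesis
    unfolding grid_def by (intro null_sets_nu) auto
qed

lemma cis_xcut_in_grid:
  assumes "k \<le> 3"
  shows "cis (xcut i k) \<in> range (Pp g) \<union> range (Qp g)"
proof -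
  have "cis (xcut i 0) = Qp g (i + 1)" "cis (xcut i 1) = Qp g (i + 2)"
       "cis (xcut i 2) = Pp g (i - 1)" "cis (xcut i 3) = Pp g i"
    by (simp_all add: xcut_def Pp_eq_cis Qp_eq_cis cis_add_2pi numeral_2_eq_2)
  moreover have "k = 0 \<or> k = 1 \<or> k = 2 \<or> k = 3" using assms by auto
  ultimately show ?thesis by auto
qed

lemma piece_minus_grid:
  assumes "(x, y) \<in> piece i k" "(x, y) \<notin> grid" "k < 3"
  obtains r s where "x = cis r" "xcut i k < r" "r < xcut i (Suc k)"
    and "y = cis s" "a i < s" "s < a (i + 1)"
proof -
  obtain r s where r: "x = cis r" "xcut i k \<le> r" "r \<le> xcut i (Suc k)"
    and s: "y = cis s" "ylow i k \<le> s" "s \<le> yhigh i k"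
    using assms(1) piece_eq_image[OF assms(3)] by auto
  have "x \<notin> range (Pp g) \<union> range (Qp g)" "y \<notin> range A"
    using assms(2) unfolding grid_def by auto
  then have "r \<noteq> xcut i k" "r \<noteq> xcut i (Suc k)" "s \<noteq> a i" "s \<noteq> a (i + 1)"
    using r(1) s(1) cis_xcut_in_grid[of k i] cis_xcut_in_grid[of "Suc k" i] assms(3)
    by (auto simp flip: a_lift(3))
  with r s y_bounds[OF assms(3), of i] show thesis by (intro that[of r s]) auto
qed

lemma pieces_overlap_in_grid:
  assumes "i \<in> {1..NN g}" "j \<in> {1..NN g}" "k < 3" "l < 3" "(i, k) \<noteq> (j, l)"
  shows "piece i k \<inter> piece j l \<subseteq> grid"
proof (rule subsetI, rule ccontr)
  fix p assume p: "p \<in> piece i k \<inter> piece j l" and out: "p \<notin> grid"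
  obtain x y where xy: "p = (x, y)" by fastforce
  obtain r s where r: "x = cis r" "xcut i k < r" "r < xcut i (Suc k)"
    and s: "y = cis s" "a i < s" "s < a (i + 1)"
    using piece_minus_grid[of x y i k] p out xy assms(3) by auto
  obtain r' s' where r': "x = cis r'" "xcut j l < r'" "r' < xcut j (Suc l)"
    and s': "y = cis s'" "a j < s'" "s' < a (j + 1)"
    using piece_minus_grid[of x y j l] p out xy assms(4) by auto
  have a_NN: "a (NN g + 1) = a 1 + 2 * pi"
    using a_add_NN[of 1] by (simp add: add.commute)
  \<comment> \<open>both lifts of \<open>y\<close> lie in \<open>(a 1, a 1 + 2\<pi>)\<close>, where \<open>cis\<close> is injective\<close>
  have "s \<in> {a 1..<a 1 + 2 * pi}" "s' \<in> {a 1..<a 1 + 2 * pi}"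
    using s s' assms(1,2) a_le[of 1 i] a_le[of 1 j] a_le[of "i + 1" "NN g + 1"] a_le[of "j + 1" "NN g + 1"]
      a_NN by auto
  then have "s = s'" using s(1) s'(1) by (auto intro: inj_onD[OF inj_on_cis])
  then have "i = j"
    using s s' a_le[of "i + 1" j] a_le[of "j + 1" i] by (cases i j rule: linorder_cases) auto
  have x_window: "xcut i 0 \<le> xcut i k" "xcut i (Suc k) \<le> xcut i 3"
      "xcut i 0 \<le> xcut i l" "xcut i (Suc l) \<le> xcut i 3" "xcut i 3 < xcut i 0 + 2 * pi"
    using assms(3,4) xcut_mono[of 0 k i] xcut_mono[of "Suc k" 3 i] xcut_mono[of 0 l i]
      xcut_mono[of "Suc l" 3 i] angle_bounds
    by (auto simp: xcut_0 xcut_3 angle_simps)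
  then have "r \<in> {xcut i 0..<xcut i 0 + 2 * pi}" "r' \<in> {xcut i 0..<xcut i 0 + 2 * pi}"
    using r r' \<open>i = j\<close> by auto
  then have "r = r'" using r(1) r'(1) by (auto intro: inj_onD[OF inj_on_cis])
  then show False
    using r r' \<open>i = j\<close> assms(3,4,5) xcut_mono[of "Suc k" l i] xcut_mono[of "Suc l" k i]
    by (cases k l rule: linorder_cases) auto
qed

definition piece_value :: "int \<Rightarrow> nat \<Rightarrow> real" where
  "piece_value i k = log_cross_ratio (xcut i k) (xcut i (Suc k)) (ylow i k) (yhigh i k)"

lemma measure_Omega_sum:
  shows "Omega g A \<in> fmeasurable nu"
    and "measure nu (Omega g A) = (\<Sum>(i, k)\<in>{1..NN g} \<times> {..<3}. piece_value i k)"
proof -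
  let ?I = "{1..NN g} \<times> {..<3::nat}"
  have fin: "piece i k \<in> fmeasurable nu" and val: "measure nu (piece i k) = piece_value i k"
    if "k < 3" for i k
    using emeasure_piece[OF that]
    by (auto intro!: fmeasurableI simp: piece_def measure_def piece_value_def)
  have "pairwise (\<lambda>p q. AE x in nu. x \<notin> case_prod piece p \<or> x \<notin> case_prod piece q) ?I"
  proof (rule pairwiseI)
    fix p q assume "p \<in> ?I" "q \<in> ?I" "p \<noteq> q"
    then have "case_prod piece p \<inter> case_prod piece q \<subseteq> grid"
      by (cases p, cases q) (simp, rule pieces_overlap_in_grid, auto)
    with AE_not_in[OF grid_null]
    show "AE x in nu. x \<notin> case_prod piece p \<or> x \<notin> case_prod piece q"
      by (auto elim!: eventually_mono)
  qed
  then have "measure nu (\<Union>p\<in>?I. case_prod piece p) = (\<Sum>p\<in>?I. measure nu (case_prod piece p))"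
    using fin by (intro measure_UNION_AE) auto
  also have "\<dots> = (\<Sum>(i, k)\<in>?I. piece_value i k)"
    using val by (intro sum.cong) auto
  finally show "measure nu (Omega g A) = (\<Sum>(i, k)\<in>?I. piece_value i k)"
    unfolding Omega_eq_pieces .
  show "Omega g A \<in> fmeasurable nu"
    unfolding Omega_eq_pieces using fin by (intro fmeasurable.finite_UN) auto
qed

definition corner_ratio :: "int \<Rightarrow> real" where
  "corner_ratio i =
     (\<bar>sin ((Arg (Cpt g A i) - Arg (Qp g (i + 2))) / 2)\<bar> *
      \<bar>sin ((Arg (Bpt g A i) - Arg (Pp g (i - 1))) / 2)\<bar>) /
     (\<bar>sin ((Arg (Bpt g A i) - Arg (Pp g i)) / 2)\<bar> *
      \<bar>sin ((Arg (Cpt g A i) - Arg (Qp g (i + 1))) / 2)\<bar>)"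

lemma corner_ratio_pos_ln:
  shows "0 < corner_ratio i"
    and "ln (corner_ratio i) =
      ln (sin ((Q_angle g (i + 2) - c i) / 2)) + ln (sin ((P_angle g (i - 1) + 2 * pi - b i) / 2))
      - ln (sin ((P_angle g i + 2 * pi - b i) / 2)) - ln (sin ((Q_angle g (i + 1) - c i) / 2))"
proof -
  have y: "a i \<le> b i" "b i \<le> a (i + 1)" "a i \<le> c i" "c i \<le> a (i + 1)"
    using y_bounds[of 0 i] y_bounds[of 2 i] by (simp_all add: ylow_def yhigh_def numeral_2_eq_2)
  let ?X = "{Q_angle g (i + 2), P_angle g (i - 1) + 2 * pi, P_angle g i + 2 * pi, Q_angle g (i + 1)}"
  have x: "Q_angle g (i + 1) \<le> x" "x \<le> P_angle g i + 2 * pi" if "x \<in> ?X" for x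
    using that angle_bounds by (auto simp: angle_simps)
  define s1 s2 s3 s4 where
    "s1 = sin ((Q_angle g (i + 2) - c i) / 2)" "s2 = sin ((P_angle g (i - 1) + 2 * pi - b i) / 2)"
    "s3 = sin ((P_angle g i + 2 * pi - b i) / 2)" "s4 = sin ((Q_angle g (i + 1) - c i) / 2)"
  have "\<bar>sin ((Arg (cis u) - Arg (cis t)) / 2)\<bar> = sin ((t - u) / 2)" "0 < sin ((t - u) / 2)"
    if "t \<in> ?X" "u \<in> {b i, c i}" for t u
  proof -
    have "0 < t - u" "t - u < 2 * pi"
      using that(2) y window_gap[where y = u, OF x[OF that(1)]] by auto
    then show "\<bar>sin ((Arg (cis u) - Arg (cis t)) / 2)\<bar> = sin ((t - u) / 2)" "0 < sin ((t - u) / 2)"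
      by (auto intro!: abs_sin_half_Arg_diff_cis sin_gt_zero)
  qed
  then have "corner_ratio i = (s1 * s2) / (s3 * s4)" "0 < s1" "0 < s2" "0 < s3" "0 < s4"
    unfolding corner_ratio_def s1_s2_s3_s4_def b_lift(3) c_lift(3) Pp_eq_cis Qp_eq_cis
    by (simp_all add: cis_add_2pi[of "P_angle g _", symmetric])
  then show "0 < corner_ratio i" "ln (corner_ratio i) =
      ln (sin ((Q_angle g (i + 2) - c i) / 2)) + ln (sin ((P_angle g (i - 1) + 2 * pi - b i) / 2))
      - ln (sin ((P_angle g i + 2 * pi - b i) / 2)) - ln (sin ((Q_angle g (i + 1) - c i) / 2))"
    unfolding s1_s2_s3_s4_def[symmetric] by (simp_all add: ln_mult ln_div)
qed

text \<open>The part of the three piece values depending on \<open>A\<close>; it telescopes around the polygon.\<close>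
definition a_term :: "int \<Rightarrow> real" where
  "a_term i = ln (sin ((Q_angle g (i + 1) - a i) / 2)) - ln (sin ((P_angle g (i - 1) + 2 * pi - a i) / 2))"

lemma sum_piece_values: "(\<Sum>k<3. piece_value i k) = ln (corner_ratio i) + (a_term i - a_term (i + 1))"
proof -
  have "i + 1 + 1 = i + 2" "i + 1 - 1 = i" by simp_all
  then show ?thesis
    unfolding corner_ratio_pos_ln(2) a_term_def piece_value_def log_cross_ratio_def
      xcut_def ylow_def yhigh_def numeral_3_eq_3 lessThan_Suc
    by (simp add: numeral_2_eq_2 add_ac)
qed

lemma a_term_add_NN: "a_term (NN g + 1) = a_term 1"
proof -
  have "Q_angle g (NN g + 1 + 1) = Q_angle g (1 + 1) + 2 * pi"
    "P_angle g (NN g + 1 - 1) = P_angle g (1 - 1) + 2 * pi"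
    using NN_times_central_angle[OF g_ge_2] by (simp_all add: angle_simps)
  moreover have "a (NN g + 1) = a 1 + 2 * pi" using a_add_NN[of 1] by (simp add: add.commute)
  ultimately show ?thesis unfolding a_term_def by (simp add: algebra_simps)
qed

lemma sum_pieces:
  "(\<Sum>(i, k)\<in>{1..NN g} \<times> {..<3}. piece_value i k) = (\<Sum>i\<in>{1..NN g}. ln (corner_ratio i))"
proof -
  have "(\<Sum>(i, k)\<in>{1..NN g} \<times> {..<3}. piece_value i k) = (\<Sum>i\<in>{1..NN g}. \<Sum>k<3. piece_value i k)"
    by (rule sum.cartesian_product[symmetric])
  also have "\<dots> = (\<Sum>i\<in>{1..NN g}. ln (corner_ratio i)) + (\<Sum>i\<in>{1..NN g}. a_term i - a_term (i + 1))"
    unfolding sum_piece_values by (rule sum.distrib)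
  also have "(\<Sum>i\<in>{1..NN g}. a_term i - a_term (i + 1)) = 0"
    using sum_telescope_int[of "NN g" a_term] NN_pos a_term_add_NN by simp
  finally show ?thesis by simp
qed

theorem measure_Omega:
  "emeasure nu (Omega g A) < \<infinity> \<and> measure nu (Omega g A) = ln (\<Prod>i\<in>{1..NN g}. corner_ratio i)"
proof
  show "emeasure nu (Omega g A) < \<infinity>"
    using measure_Omega_sum(1) by (simp add: fmeasurable_def)
  have "ln (\<Prod>i\<in>{1..NN g}. corner_ratio i) = (\<Sum>i\<in>{1..NN g}. ln (corner_ratio i))"
    using corner_ratio_pos_ln(1) by (intro ln_prod) (auto simp: less_le)
  then show "measure nu (Omega g A) = ln (\<Prod>i\<in>{1..NN g}. corner_ratio i)"
    by (simp add: measure_Omega_sum(2) sum_pieces)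
qed

end

theorem proposition7p1:
  fixes g :: nat and A :: "int \<Rightarrow> complex"
  assumes "g \<ge> 2"
    and "\<forall>i. A (i + NN g) = A i"
    and "\<forall>i. A i \<in> open_arc (Pp g i) (Qp g i)"
    and "\<forall>i. T g i (A i) \<in> open_arc (Qp g (rho g i)) (A (rho g i + 1))"
    and "\<forall>i. T g (i - 1) (A i) \<in> open_arc (A (theta g (i - 1))) (Pp g (theta g (i - 1) + 1))"
  shows "emeasure nu (Omega g A) < \<infinity> \<and>
    measure nu (Omega g A) =
      ln (\<Prod>i\<in>{1..NN g}.
        (\<bar>sin ((Arg (Cpt g A i) - Arg (Qp g (i + 2))) / 2)\<bar> *
         \<bar>sin ((Arg (Bpt g A i) - Arg (Pp g (i - 1))) / 2)\<bar>) /
        (\<bar>sin ((Arg (Bpt g A i) - Arg (Pp g i)) / 2)\<bar> *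
         \<bar>sin ((Arg (Cpt g A i) - Arg (Qp g (i + 1))) / 2)\<bar>))"
proof -
  interpret polygon_partition g A
  proof
    fix i
    show "Bpt g A i \<in> open_arc (Qp g i) (A (i + 1))"
      using assms(4)[rule_format, of "sigma g (i - 1)"] by (simp add: Bpt_def rho_def sigma_sigma)
    show "Cpt g A i \<in> open_arc (A i) (Pp g (i + 1))"
      using assms(5)[rule_format, of "sigma g (i + 1) + 1"] by (simp add: Cpt_def theta_def sigma_sigma)
  qed (use assms in auto)
  show ?thesis using measure_Omega unfolding corner_ratio_def .
qed

end
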